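(* Let $\sigma_1,\dots,\sigma_n$ be one-qubit pure states with Bloch vectors $s_1,\dots,s_n\in\mathbb{R}^3$ ($|s_i|=1$). For $a\in(0,1)$ put $\sigma_i(a)=\tfrac12 I+a(\sigma_i-\tfrac12 I)$ (the state with Bloch vector $a s_i$), and define $$A_i(a)=\{\rho\in\mathcal{S}^{\mathrm{faithful}} : D(\rho\|\sigma_i(a))\le D(\rho\|\sigma_j(a))\ \text{for all } j\},\qquad B_i(a)=\{\rho\in\mathcal{S}^{\mathrm{faithful}} : D(\sigma_i(a)\|\rho)\le D(\sigma_j(a)\|\rho)\ \text{for all } j\}.$$ Then for every $i$ the set limits $\lim_{a\to1}A_i(a)$ and $\lim_{a\to 1}B_i(a)$ exist, and the following six subsets of the set $\mathcal{S}^{\mathrm{pure}}$ of one-qubit pure states coincide: (1) $\{\rho\in\mathcal{S}^{\mathrm{pure}}: d_{\mathrm{FS}}(\rho,\sigma_i)\le d_{\mathrm{FS}}(\rho,\sigma_j)\ \forall j\}$; (2) $\{\rho\in\mathcal{S}^{\mathrm{pure}}: d_{\mathrm{B}}(\rho,\sigma_i)\le d_{\mathrm{B}}(\rho,\sigma_j)\ \forall j\}$; (3) the set of pure $\rho$ whose Bloch vector $x$ satisfies $\arccos(x\cdot s_i)\le \arccos(x\cdot s_j)$ for all $j$ (Voronoi region on the unit sphere for the geodesic distance); (4) the set of pure $\rho$ whose Bloch vector $x$ satisfies $|x-s_i|\le |x-s_j|$ for all $j$ (section of the 3-dimensional Euclidean Voronoi diagram with the sphere); (5) $\mathrm{Closure}(\lim_{a\to1}A_i(a))\cap\mathcal{S}^{\mathrm{pure}}$;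 (6) $\mathrm{Closure}(\lim_{a\to1}B_i(a))\cap\mathcal{S}^{\mathrm{pure}}$. That is, the Voronoi diagrams of these sites in the space of pure states with respect to the Fubini–Study distance, the Bures distance, the geodesic distance on the sphere, the Euclidean distance, and the two divergences all coincide.
   Context: A one-qubit state is a $2\times2$ density matrix (Hermitian, trace one, positive semidefinite), parameterized by its Bloch vector $(x,y,z)\in\mathbb{R}^3$, $x^2+y^2+z^2\le 1$, via $\rho=\begin{pmatrix}\frac{1+z}{2}&\frac{x-iy}{2}\\ \frac{x+iy}{2}&\frac{1-z}{2}\end{pmatrix}$. $\mathcal{S}$ is the set of all such states; $\rho$ is pure iff $\mathrm{rank}\,\rho=1$ (iff $|(x,y,z)|=1$), and faithful iff $\mathrm{rank}\,\rho=2$ (iff $|(x,y,z)|<1$); $\mathcal{S}^{\mathrm{pure}},\mathcal{S}^{\mathrm{faithful}}$ denote the corresponding subsets. The quantum divergence is $D(\sigma\|\rho)=\mathrm{Tr}\,\sigma(\log\sigma-\log\rho)$, defined when $\rho$ is faithful, with the convention $0\log0=0$; matrix functions are applied to eigenvalues. For pure $\rho,\sigma$ the Fubini–Study distance $d_{\mathrm{FS}}(\rho,\sigma)\in[0,\pi/2]$ is defined by $\cos d_{\mathrm{FS}}(\rho,\sigma)=\sqrt{\mathrm{Tr}(\rho\sigma)}$. The Bures distance is $d_{\mathrm{B}}(\rho,\sigma)=\sqrt{1-\mathrm{Tr}\sqrt{\sqrt{\sigma}\rho\sqrt{\sigma}}}$. $\mathrm{Closure}$ denotes topological closure in $\mathcal{S}$.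 *)

theory Defs
  imports "HOL-Analysis.Analysis"
begin

type_synonym cmat = "complex^2^2"

definition bloch :: "real^3 \<Rightarrow> cmat" where
  "bloch x = (\<chi> i j.
      if i = 1 \<and> j = 1 then (1 + complex_of_real (x$3)) / 2
      else if i = 1 \<and> j = 2 then (complex_of_real (x$1) - \<i> * complex_of_real (x$2)) / 2
      else if i = 2 \<and> j = 1 then (complex_of_real (x$1) + \<i> * complex_of_real (x$2)) / 2
      else (1 - complex_of_real (x$3)) / 2)"

definition states :: "cmat set" where "states = bloch ` cball 0 1"
definition pure_states :: "cmat set" where "pure_states = bloch ` sphere 0 1"
definition faithful_states :: "cmat set" where "faithful_states = bloch ` ball 0 1"

text \<open>Matrix function of a Hermitian 2x2 matrix: f applied to the eigenvalues
  lp, lm (roots of the characteristic polynomial) via the spectral projectors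
  (M - lm I)/(lp - lm) and (lp I - M)/(lp - lm).\<close>
definition mfun :: "(real \<Rightarrow> real) \<Rightarrow> cmat \<Rightarrow> cmat" where
  "mfun f M = (let tr = Re (trace M); dt = Re (det M);
                   r = sqrt (tr\<^sup>2 / 4 - dt); lp = tr / 2 + r; lm = tr / 2 - r
               in if r = 0 then f (tr / 2) *\<^sub>R mat 1
                  else (f lp / (lp - lm)) *\<^sub>R (M - lm *\<^sub>R mat 1)
                     + (f lm / (lp - lm)) *\<^sub>R (lp *\<^sub>R mat 1 - M))"

text \<open>Quantum divergence D(sigma||rho) = Tr sigma (log sigma - log rho), with 0 log 0 = 0:
  the term sigma log sigma is the matrix function x log x of sigma.\<close>
definition qdiv :: "cmat \<Rightarrow> cmat \<Rightarrow> real" where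
  "qdiv \<sigma> \<rho> = Re (trace (mfun (\<lambda>x. x * ln x) \<sigma>) - trace (\<sigma> ** mfun ln \<rho>))"

definition d_FS :: "cmat \<Rightarrow> cmat \<Rightarrow> real" where
  "d_FS \<rho> \<sigma> = arccos (sqrt (Re (trace (\<rho> ** \<sigma>))))"

definition d_B :: "cmat \<Rightarrow> cmat \<Rightarrow> real" where
  "d_B \<rho> \<sigma> = sqrt (1 - Re (trace (mfun sqrt (mfun sqrt \<sigma> ** \<rho> ** mfun sqrt \<sigma>))))"

definition set_liminf :: "'b filter \<Rightarrow> ('b \<Rightarrow> 'a set) \<Rightarrow> 'a set" where
  "set_liminf F X = {x. eventually (\<lambda>a. x \<in> X a) F}"
definition set_limsup :: "'b filter \<Rightarrow> ('b \<Rightarrow> 'a set) \<Rightarrow> 'a set" where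
  "set_limsup F X = {x. frequently (\<lambda>a. x \<in> X a) F}"
definition set_lim_exists :: "'b filter \<Rightarrow> ('b \<Rightarrow> 'a set) \<Rightarrow> bool" where
  "set_lim_exists F X \<longleftrightarrow> set_liminf F X = set_limsup F X"
definition set_lim :: "'b filter \<Rightarrow> ('b \<Rightarrow> 'a set) \<Rightarrow> 'a set" where
  "set_lim F X = set_liminf F X"

definition shrink :: "real \<Rightarrow> cmat \<Rightarrow> cmat" where
  "shrink a \<sigma> = (1/2) *\<^sub>R mat 1 + a *\<^sub>R (\<sigma> - (1/2) *\<^sub>R mat 1)"

end

theory Submission
  imports Defs
begin

text \<open>Write x for the Bloch vector of \<rho>. Every quantity in the statement compares two
  sites s, s' through a strictly monotone function of the inner product x \<bullet> s:
  Tr \<rho>\<sigma> = (1 + x \<bullet> s)/2 gives the Fubini-Study and (for a pure site) the Bures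
  distance, |x - s|^2 = 2 - 2 x \<bullet> s on the sphere, and both divergences are affine in
  x \<bullet> s with positive slope, proportional to ln ((1 + r)/(1 - r)) where r is the length
  of the Bloch vector inside the logarithm. So every region is the corresponding set of Bloch
  vectors cut down to the cone {x. x \<bullet> s_j \<le> x \<bullet> s_i for all j}. For the divergences
  this holds for every a in (0, 1), so the set limits are constant, and the closure of the
  part of a closed cone inside the open ball meets the sphere in the spherical part of the cone.\<close>

lemma abs_inner_le_1: "norm x \<le> 1 \<Longrightarrow> norm y \<le> 1 \<Longrightarrow> \<bar>x \<bullet> y\<bar> \<le> 1"
  using Cauchy_Schwarz_ineq2[of x y] by (smt (verit) mult_le_one norm_ge_zero)

lemma dist_le_iff_inner_ge:
  fixes x y z :: "'a::real_inner"
  assumes "norm x = 1" "norm y = 1" "norm z = 1"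
  shows "dist x y \<le> dist x z \<longleftrightarrow> x \<bullet> z \<le> x \<bullet> y"
proof -
  have "(dist x w)\<^sup>2 = 2 - 2 * (x \<bullet> w)" if "norm w = 1" for w
    using assms(1) that
    by (simp add: dist_norm power2_norm_eq_inner inner_diff_left inner_diff_right inner_commute
        norm_eq_1)
  moreover have "dist x y \<le> dist x z \<longleftrightarrow> (dist x y)\<^sup>2 \<le> (dist x z)\<^sup>2"
    by (simp add: power_mono_iff)
  ultimately show ?thesis
    using assms by simp
qed

lemma arccos_sqrt_half_le_iff:
  "\<bar>u\<bar> \<le> 1 \<Longrightarrow> \<bar>v\<bar> \<le> 1 \<Longrightarrow>
    arccos (sqrt ((1 + u) / 2)) \<le> arccos (sqrt ((1 + v) / 2)) \<longleftrightarrow> v \<le> u"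
  by (subst arccos_le_mono) auto

lemma sqrt_one_minus_sqrt_half_le_iff:
  "\<bar>u\<bar> \<le> 1 \<Longrightarrow> \<bar>v\<bar> \<le> 1 \<Longrightarrow>
    sqrt (1 - sqrt ((1 + u) / 2)) \<le> sqrt (1 - sqrt ((1 + v) / 2)) \<longleftrightarrow> v \<le> u"
  by auto

lemma ln_half_diff_pos:
  "0 < (r::real) \<Longrightarrow> r < 1 \<Longrightarrow> 0 < ln ((1 + r) / 2) - ln ((1 - r) / 2)"
  by simp

lemma Collect_mem_image: "{y \<in> f ` S. P y} = f ` {x \<in> S. P (f x)}"
  by auto

lemma set_lim_eventually_const:
  assumes "eventually (\<lambda>a. X a = Y) F" and "F \<noteq> bot"
  shows "set_lim_exists F X \<and> set_lim F X = Y"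
proof -
  have "eventually (\<lambda>a. x \<in> X a) F \<longleftrightarrow> x \<in> Y" "frequently (\<lambda>a. x \<in> X a) F \<longleftrightarrow> x \<in> Y" for x
    using eventually_cong[OF assms(1), of "\<lambda>a. x \<in> X a" "\<lambda>_. x \<in> Y"]
      frequently_cong[OF assms(1), of "\<lambda>a. x \<in> X a" "\<lambda>_. x \<in> Y"] assms(2)
    by (simp_all add: eventually_const_iff)
  then show ?thesis
    unfolding set_lim_exists_def set_lim_def set_liminf_def set_limsup_def by auto
qed

definition voronoi_cone :: "(nat \<Rightarrow> 'a::real_inner) \<Rightarrow> nat \<Rightarrow> nat \<Rightarrow> 'a set" where
  "voronoi_cone s n k = {x. \<forall>j<n. x \<bullet> s j \<le> x \<bullet> s k}"

lemma closed_voronoi_cone: "closed (voronoi_cone s n k)"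
proof -
  have "voronoi_cone s n k = (\<Inter>j<n. {x. (s j - s k) \<bullet> x \<le> 0})"
    by (auto simp: voronoi_cone_def inner_diff_left inner_diff_right inner_commute)
  then show ?thesis
    by (auto intro!: closed_INT closed_halfspace_le)
qed

lemma scaleR_mem_voronoi_cone:
  "x \<in> voronoi_cone s n k \<Longrightarrow> 0 \<le> t \<Longrightarrow> t *\<^sub>R x \<in> voronoi_cone s n k"
  by (auto simp: voronoi_cone_def intro: mult_left_mono)

lemma arccos_voronoi_region:
  fixes s :: "nat \<Rightarrow> 'a::real_inner"
  assumes "\<forall>j<n. norm (s j) = 1" "i < n"
  shows "{x. norm x = 1 \<and> (\<forall>j<n. arccos (x \<bullet> s i) \<le> arccos (x \<bullet> s j))}
    = sphere 0 1 \<inter> voronoi_cone s n i"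
  using assms by (auto simp: voronoi_cone_def arccos_le_mono abs_inner_le_1)

lemma dist_voronoi_region:
  fixes s :: "nat \<Rightarrow> 'a::real_inner"
  assumes "\<forall>j<n. norm (s j) = 1" "i < n"
  shows "{x. norm x = 1 \<and> (\<forall>j<n. dist x (s i) \<le> dist x (s j))}
    = sphere 0 1 \<inter> voronoi_cone s n i"
  using assms by (auto simp: voronoi_cone_def dist_le_iff_inner_ge)

lemma trace_scaleR: "trace (c *\<^sub>R (M::'a::real_algebra_1^'n^'n)) = c *\<^sub>R trace M"
  by (simp add: trace_def scaleR_sum_right)

lemma Re_trace_mfun:
  fixes M :: cmat
  defines "r \<equiv> sqrt ((Re (trace M))\<^sup>2 / 4 - Re (det M))"
  shows "Re (trace (mfun f M)) = f (Re (trace M) / 2 + r) + f (Re (trace M) / 2 - r)"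
proof (cases "r = 0")
  case True
  then show ?thesis
    unfolding mfun_def Let_def r_def[symmetric] by (simp add: trace_scaleR trace_I)
next
  case False
  then show ?thesis
    unfolding mfun_def Let_def r_def[symmetric]
    by (simp add: trace_scaleR trace_I trace_add trace_sub field_simps)
qed

lemma Re_trace_mfun_singular:
  fixes M :: cmat
  assumes "f 0 = 0" and "Re (det M) = 0"
  shows "Re (trace (mfun f M)) = f (Re (trace M))"
proof -
  let ?t = "Re (trace M)"
  have "?t\<^sup>2 / 4 - Re (det M) = (\<bar>?t\<bar> / 2)\<^sup>2"
    using assms(2) by (simp add: power_divide)
  then have r: "sqrt (?t\<^sup>2 / 4 - Re (det M)) = \<bar>?t\<bar> / 2"
    by simp
  have "Re (trace (mfun f M)) = f (?t / 2 + \<bar>?t\<bar> / 2) + f (?t / 2 - \<bar>?t\<bar> / 2)"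
    using Re_trace_mfun[of f M] unfolding r .
  then show ?thesis
    using assms(1) by (cases "?t \<ge> 0") (simp_all add: abs_if)
qed

lemma bloch_nth:
  "bloch x $ 1 $ 1 = (1 + complex_of_real (x$3)) / 2"
  "bloch x $ 1 $ 2 = (complex_of_real (x$1) - \<i> * complex_of_real (x$2)) / 2"
  "bloch x $ 2 $ 1 = (complex_of_real (x$1) + \<i> * complex_of_real (x$2)) / 2"
  "bloch x $ 2 $ 2 = (1 - complex_of_real (x$3)) / 2"
  by (simp_all add: bloch_def)

lemma norm_vec3_power2: "(norm (x::real^3))\<^sup>2 = (x$1)\<^sup>2 + (x$2)\<^sup>2 + (x$3)\<^sup>2"
  by (simp add: norm_vec_def L2_set_def sum_3)

lemma inner_vec3: "(x::real^3) \<bullet> y = x$1 * y$1 + x$2 * y$2 + x$3 * y$3"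
  by (simp add: inner_vec_def sum_3)

lemma trace_bloch: "trace (bloch x) = 1"
  by (simp add: trace_def sum_2 bloch_nth field_simps)

lemma det_bloch: "det (bloch x) = complex_of_real ((1 - (norm x)\<^sup>2) / 4)"
  using norm_vec3_power2[of x]
  by (simp add: det_2 bloch_nth complex_eq_iff field_simps power2_eq_square)

lemma trace_bloch_mult_bloch: "Re (trace (bloch y ** bloch x)) = (1 + x \<bullet> y) / 2"
  by (simp add: trace_def matrix_matrix_mult_def sum_2 bloch_nth inner_vec3 field_simps)

lemma bloch_eq_iff: "bloch x = bloch y \<longleftrightarrow> x = y"
  by (auto simp: vec_eq_iff bloch_def forall_2 forall_3 complex_eq_iff)

lemma shrink_bloch: "shrink a (bloch x) = bloch (a *\<^sub>R x)"
  by (simp add: shrink_def bloch_def vec_eq_iff forall_2 mat_def complex_eq_iff field_simps)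

lemma continuous_on_bloch: "continuous_on S bloch"
proof -
  have if_const: "continuous_on S (\<lambda>x. if P then f x else g x)"
    if "continuous_on S f" "continuous_on S g" for P and f g :: "real^3 \<Rightarrow> complex"
    using that by (cases P) auto
  show ?thesis
    unfolding bloch_def by (intro continuous_on_vec_lambda if_const continuous_intros) auto
qed

lemma sqrt_discriminant_bloch:
  "sqrt ((Re (trace (bloch x)))\<^sup>2 / 4 - Re (det (bloch x))) = norm x / 2"
  by (simp add: trace_bloch det_bloch field_simps real_sqrt_divide)

lemma mfun_bloch: "mfun f (bloch x) =
   (if x = 0 then f (1/2) *\<^sub>R mat 1 else
    (f ((1 + norm x) / 2) / norm x) *\<^sub>R (bloch x - ((1 - norm x) / 2) *\<^sub>R mat 1)
  + (f ((1 - norm x) / 2) / norm x) *\<^sub>R (((1 + norm x) / 2) *\<^sub>R mat 1 - bloch x))"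
  unfolding mfun_def Let_def sqrt_discriminant_bloch
  by (simp add: trace_bloch add_divide_distrib diff_divide_distrib)

lemma Re_trace_mfun_bloch:
  "Re (trace (mfun f (bloch x))) = f ((1 + norm x) / 2) + f ((1 - norm x) / 2)"
  using Re_trace_mfun[of f "bloch x"] unfolding sqrt_discriminant_bloch unfolding trace_bloch
  by (simp add: add_divide_distrib diff_divide_distrib)

lemma Re_trace_bloch_mult_mfun:
  "Re (trace (bloch y ** mfun f (bloch x))) =
     (f ((1 + norm x) / 2) + f ((1 - norm x) / 2)) / 2
   + (f ((1 + norm x) / 2) - f ((1 - norm x) / 2)) * (x \<bullet> y) / (2 * norm x)"
  \<comment> \<open>For x = 0 the last summand vanishes since division by zero yields 0.\<close>
  by (cases "x = 0")
    (simp_all add: mfun_bloch trace_def matrix_matrix_mult_def sum_2 bloch_nth mat_def inner_vec3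
      field_simps)

lemma bloch_mult_self_pure: "norm s = 1 \<Longrightarrow> bloch s ** bloch s = bloch s"
  using norm_vec3_power2[of s]
  by (simp add: vec_eq_iff forall_2 matrix_matrix_mult_def sum_2 bloch_nth complex_eq_iff
      field_simps power2_eq_square)

lemma mfun_bloch_pure: "norm s = 1 \<Longrightarrow> f 0 = 0 \<Longrightarrow> mfun f (bloch s) = f 1 *\<^sub>R bloch s"
  by (auto simp: mfun_bloch)

lemma d_FS_bloch: "d_FS (bloch x) (bloch y) = arccos (sqrt ((1 + x \<bullet> y) / 2))"
  by (simp add: d_FS_def trace_bloch_mult_bloch inner_commute)

lemma d_B_bloch_pure:
  assumes "norm s = 1"
  shows "d_B (bloch x) (bloch s) = sqrt (1 - sqrt ((1 + x \<bullet> s) / 2))"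
proof -
  let ?M = "bloch s ** bloch x ** bloch s"
  have "trace ?M = trace (bloch s ** (bloch s ** bloch x))"
    by (metis trace_mul_sym)
  also have "\<dots> = trace (bloch s ** bloch x)"
    by (simp add: matrix_mul_assoc bloch_mult_self_pure assms)
  finally have "Re (trace ?M) = (1 + x \<bullet> s) / 2"
    by (simp add: trace_bloch_mult_bloch inner_commute)
  moreover have "Re (det ?M) = 0"
    by (simp add: det_mul det_bloch assms)
  ultimately show ?thesis
    unfolding d_B_def by (simp add: mfun_bloch_pure assms Re_trace_mfun_singular)
qed

lemma qdiv_bloch:
  "qdiv (bloch x) (bloch y) = Re (trace (mfun (\<lambda>t. t * ln t) (bloch x)))
     - (ln ((1 + norm y) / 2) + ln ((1 - norm y) / 2)) / 2
     - (ln ((1 + norm y) / 2) - ln ((1 - norm y) / 2)) * (x \<bullet> y) / (2 * norm y)"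
  by (simp add: qdiv_def Re_trace_bloch_mult_mfun inner_commute)

lemma qdiv_right_le_iff:
  assumes "norm y' = norm y" "0 < norm y" "norm y < 1"
  shows "qdiv (bloch x) (bloch y) \<le> qdiv (bloch x) (bloch y') \<longleftrightarrow> x \<bullet> y' \<le> x \<bullet> y"
proof -
  define c where "c = (ln ((1 + norm y) / 2) - ln ((1 - norm y) / 2)) / (2 * norm y)"
  have "0 < c"
    unfolding c_def using assms by (intro divide_pos_pos ln_half_diff_pos) auto
  have "qdiv (bloch x) (bloch w) = Re (trace (mfun (\<lambda>t. t * ln t) (bloch x)))
      - (ln ((1 + norm y) / 2) + ln ((1 - norm y) / 2)) / 2 - c * (x \<bullet> w)"
    if "norm w = norm y" for w
    unfolding qdiv_bloch c_def that by simp
  then show ?thesis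
    using \<open>0 < c\<close> assms(1) by (simp add: mult_le_cancel_left_pos)
qed

lemma qdiv_left_le_iff:
  assumes "norm y' = norm y" "norm x < 1"
  shows "qdiv (bloch y) (bloch x) \<le> qdiv (bloch y') (bloch x) \<longleftrightarrow> x \<bullet> y' \<le> x \<bullet> y"
proof (cases "x = 0")
  case False
  define c where "c = (ln ((1 + norm x) / 2) - ln ((1 - norm x) / 2)) / (2 * norm x)"
  have "0 < c"
    unfolding c_def using assms False by (intro divide_pos_pos ln_half_diff_pos) auto
  have "qdiv (bloch w) (bloch x) = Re (trace (mfun (\<lambda>t. t * ln t) (bloch y)))
      - (ln ((1 + norm x) / 2) + ln ((1 - norm x) / 2)) / 2 - c * (x \<bullet> w)"
    if "norm w = norm y" for w
    unfolding qdiv_bloch c_def Re_trace_mfun_bloch that by (simp add: inner_commute)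
  then show ?thesis
    using \<open>0 < c\<close> assms(1) by (simp add: mult_le_cancel_left_pos)
qed (simp add: qdiv_bloch Re_trace_mfun_bloch assms(1))

lemma d_FS_voronoi_region:
  assumes "\<forall>j<n. norm (s j) = 1" "i < n"
  shows "{\<rho> \<in> pure_states. \<forall>j<n. d_FS \<rho> (bloch (s i)) \<le> d_FS \<rho> (bloch (s j))}
    = bloch ` (sphere 0 1 \<inter> voronoi_cone s n i)"
  unfolding pure_states_def Collect_mem_image
  using assms by (auto simp: voronoi_cone_def d_FS_bloch arccos_sqrt_half_le_iff abs_inner_le_1)

lemma d_B_voronoi_region:
  assumes "\<forall>j<n. norm (s j) = 1" "i < n"
  shows "{\<rho> \<in> pure_states. \<forall>j<n. d_B \<rho> (bloch (s i)) \<le> d_B \<rho> (bloch (s j))}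
    = bloch ` (sphere 0 1 \<inter> voronoi_cone s n i)"
  unfolding pure_states_def Collect_mem_image
  using assms
  by (auto simp: voronoi_cone_def d_B_bloch_pure sqrt_one_minus_sqrt_half_le_iff abs_inner_le_1)

lemma qdiv_right_voronoi_region:
  assumes "\<forall>j<n. norm (s j) = 1" "k < n" "0 < a" "a < 1"
  shows "{\<rho> \<in> faithful_states.
      \<forall>j<n. qdiv \<rho> (shrink a (bloch (s k))) \<le> qdiv \<rho> (shrink a (bloch (s j)))}
    = bloch ` (ball 0 1 \<inter> voronoi_cone s n k)"
  unfolding faithful_states_def Collect_mem_image shrink_bloch
  using assms by (auto simp: voronoi_cone_def qdiv_right_le_iff)

lemma qdiv_left_voronoi_region:
  assumes "\<forall>j<n. norm (s j) = 1" "k < n" "0 < a"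
  shows "{\<rho> \<in> faithful_states.
      \<forall>j<n. qdiv (shrink a (bloch (s k))) \<rho> \<le> qdiv (shrink a (bloch (s j))) \<rho>}
    = bloch ` (ball 0 1 \<inter> voronoi_cone s n k)"
  unfolding faithful_states_def Collect_mem_image shrink_bloch
  using assms by (auto simp: voronoi_cone_def qdiv_left_le_iff)

lemma closure_faithful_cone_Int_pure:
  assumes "closed K" and cone: "\<And>x t. x \<in> K \<Longrightarrow> 0 \<le> t \<Longrightarrow> t *\<^sub>R x \<in> K"
  shows "closure (bloch ` (ball 0 1 \<inter> K)) \<inter> pure_states = bloch ` (sphere 0 1 \<inter> K)"
proof
  have "closed (bloch ` (cball 0 1 \<inter> K))"
    using compact_Int_closed[OF compact_cball assms(1)]
    by (intro compact_imp_closed compact_continuous_image continuous_on_bloch)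
  then have "closure (bloch ` (ball 0 1 \<inter> K)) \<subseteq> bloch ` (cball 0 1 \<inter> K)"
    by (rule closure_minimal[rotated]) auto
  then show "closure (bloch ` (ball 0 1 \<inter> K)) \<inter> pure_states \<subseteq> bloch ` (sphere 0 1 \<inter> K)"
    by (auto simp: pure_states_def bloch_eq_iff)
next
  have "bloch x \<in> closure (bloch ` (ball 0 1 \<inter> K))" if x: "norm x = 1" "x \<in> K" for x
  proof (rule Lim_in_closed_set)
    have "isCont bloch (1 *\<^sub>R x)"
      using continuous_on_bloch[of UNIV] by (simp add: continuous_on_eq_continuous_at)
    then show "((\<lambda>t. bloch (t *\<^sub>R x)) \<longlongrightarrow> bloch x) (at_left 1)"
      using isCont_tendsto_compose tendsto_scaleR[OF tendsto_ident_at tendsto_const] by fastforce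
    have "t *\<^sub>R x \<in> ball 0 1 \<inter> K" if "0 < t" "t < 1" for t
      using that x cone[of x t] by auto
    then show "\<forall>\<^sub>F t in at_left 1. bloch (t *\<^sub>R x) \<in> closure (bloch ` (ball 0 1 \<inter> K))"
      using eventually_at_left_real[OF zero_less_one]
      by (auto elim!: eventually_mono intro: closure_subset[THEN subsetD])
  qed auto
  then show "bloch ` (sphere 0 1 \<inter> K) \<subseteq> closure (bloch ` (ball 0 1 \<inter> K)) \<inter> pure_states"
    by (auto simp: pure_states_def)
qed

theorem mainTheorem1:
  fixes n :: nat and s :: "nat \<Rightarrow> real^3" and i :: nat
  assumes sites: "\<forall>j<n. norm (s j) = 1"
    and i: "i < n"
  defines "\<sigma> \<equiv> \<lambda>j. bloch (s j)"
  defines "A \<equiv> \<lambda>k (a::real). {\<rho> \<in> faithful_states.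
              \<forall>j<n. qdiv \<rho> (shrink a (\<sigma> k)) \<le> qdiv \<rho> (shrink a (\<sigma> j))}"
  defines "B \<equiv> \<lambda>k (a::real). {\<rho> \<in> faithful_states.
              \<forall>j<n. qdiv (shrink a (\<sigma> k)) \<rho> \<le> qdiv (shrink a (\<sigma> j)) \<rho>}"
  defines "V1 \<equiv> {\<rho> \<in> pure_states. \<forall>j<n. d_FS \<rho> (\<sigma> i) \<le> d_FS \<rho> (\<sigma> j)}"
  defines "V2 \<equiv> {\<rho> \<in> pure_states. \<forall>j<n. d_B \<rho> (\<sigma> i) \<le> d_B \<rho> (\<sigma> j)}"
  defines "V3 \<equiv> bloch ` {x. norm x = 1 \<and> (\<forall>j<n. arccos (x \<bullet> s i) \<le> arccos (x \<bullet> s j))}"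
  defines "V4 \<equiv> bloch ` {x. norm x = 1 \<and> (\<forall>j<n. dist x (s i) \<le> dist x (s j))}"
  defines "V5 \<equiv> closure (set_lim (at_left 1) (A i)) \<inter> pure_states"
  defines "V6 \<equiv> closure (set_lim (at_left 1) (B i)) \<inter> pure_states"
  shows "(\<forall>k<n. set_lim_exists (at_left 1) (A k) \<and> set_lim_exists (at_left 1) (B k))
         \<and> V1 = V2 \<and> V2 = V3 \<and> V3 = V4 \<and> V4 = V5 \<and> V5 = V6"
proof -
  let ?C = "voronoi_cone s n"
  have cells: "\<forall>\<^sub>F a in at_left 1.
      A k a = bloch ` (ball 0 1 \<inter> ?C k) \<and> B k a = bloch ` (ball 0 1 \<inter> ?C k)"
    if "k < n" for k
    using eventually_at_left_real[OF zero_less_one]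
    by eventually_elim
      (simp add: A_def B_def \<sigma>_def qdiv_right_voronoi_region[OF sites that]
        qdiv_left_voronoi_region[OF sites that])
  have lim_A: "set_lim_exists (at_left 1) (A k) \<and>
      set_lim (at_left 1) (A k) = bloch ` (ball 0 1 \<inter> ?C k)"
   and lim_B: "set_lim_exists (at_left 1) (B k) \<and>
      set_lim (at_left 1) (B k) = bloch ` (ball 0 1 \<inter> ?C k)"
    if "k < n" for k
    using cells[OF that] by (auto intro!: set_lim_eventually_const elim: eventually_mono)
  have pure_cell:
    "closure (bloch ` (ball 0 1 \<inter> ?C i)) \<inter> pure_states = bloch ` (sphere 0 1 \<inter> ?C i)"
    by (intro closure_faithful_cone_Int_pure closed_voronoi_cone scaleR_mem_voronoi_cone)
  have "V1 = bloch ` (sphere 0 1 \<inter> ?C i)"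
    unfolding V1_def \<sigma>_def using d_FS_voronoi_region[OF sites i] .
  moreover have "V2 = bloch ` (sphere 0 1 \<inter> ?C i)"
    unfolding V2_def \<sigma>_def using d_B_voronoi_region[OF sites i] .
  moreover have "V3 = bloch ` (sphere 0 1 \<inter> ?C i)"
    unfolding V3_def arccos_voronoi_region[OF sites i] ..
  moreover have "V4 = bloch ` (sphere 0 1 \<inter> ?C i)"
    unfolding V4_def dist_voronoi_region[OF sites i] ..
  moreover have "V5 = bloch ` (sphere 0 1 \<inter> ?C i)"
    unfolding V5_def using lim_A[OF i] pure_cell by simp
  moreover have "V6 = bloch ` (sphere 0 1 \<inter> ?C i)"
    unfolding V6_def using lim_B[OF i] pure_cell by simp
  ultimately show ?thesis
    using lim_A lim_B by simp
qed

end
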